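(* Let $S_d$, $d\ge1$, be nonnegative random variables such that for some positive $\mu,q,C$, $$M_d(t):=E[e^{tS_d}]\le\frac{C}{(1-\mu t/q)^{qd}}\quad\text{for all }t\le0.$$ Then for every $m\ge1$ and $d\ge 2m/q$, $E[(d/S_d)^m]\le C_{\mu,m}$, where $C_{\mu,m}=C(2/\mu)^m$ depends only on $\mu,m$ (and $C$). Moreover, if $S_d=\sum_{i=1}^dV_i$ with $V_1,\dots,V_d$ nonnegative and negatively associated, and each $V_i$ satisfies $E[e^{tV_i}]\le(1-\mu t/q)^{-q}$ for all $t\le0$, then for every $m\ge1$ and $d\ge2m/q$, $E[(d/S_d)^m]\le(2/\mu)^m$.
   Context: Random variables $V_1,\dots,V_d$ are negatively associated if for all disjoint $A,B\subset\{1,\dots,d\}$, $\mathrm{Cov}(f(V_i,i\in A),g(V_i,i\in B))\le0$ whenever $f,g$ are both non-decreasing or both non-increasing. *)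

theory Defs
  imports "HOL-Probability.Probability"
begin

definition neg_assoc :: "'a measure \<Rightarrow> (nat \<Rightarrow> 'a \<Rightarrow> real) \<Rightarrow> nat set \<Rightarrow> bool" where
  "neg_assoc M V I \<longleftrightarrow>
     (\<forall>i\<in>I. V i \<in> borel_measurable M) \<and>
     (\<forall>A B (f :: (nat \<Rightarrow> real) \<Rightarrow> real) (g :: (nat \<Rightarrow> real) \<Rightarrow> real). A \<subseteq> I \<longrightarrow> B \<subseteq> I \<longrightarrow> A \<inter> B = {} \<longrightarrow>
        f \<in> borel_measurable (Pi\<^sub>M A (\<lambda>_. borel)) \<longrightarrow>
        g \<in> borel_measurable (Pi\<^sub>M B (\<lambda>_. borel)) \<longrightarrow>
        ((\<forall>u\<in>space (Pi\<^sub>M A (\<lambda>_. borel)). \<forall>v\<in>space (Pi\<^sub>M A (\<lambda>_. borel)). u \<le> v \<longrightarrow> f u \<le> f v) \<and>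
         (\<forall>u\<in>space (Pi\<^sub>M B (\<lambda>_. borel)). \<forall>v\<in>space (Pi\<^sub>M B (\<lambda>_. borel)). u \<le> v \<longrightarrow> g u \<le> g v) \<or>
         (\<forall>u\<in>space (Pi\<^sub>M A (\<lambda>_. borel)). \<forall>v\<in>space (Pi\<^sub>M A (\<lambda>_. borel)). u \<le> v \<longrightarrow> f v \<le> f u) \<and>
         (\<forall>u\<in>space (Pi\<^sub>M B (\<lambda>_. borel)). \<forall>v\<in>space (Pi\<^sub>M B (\<lambda>_. borel)). u \<le> v \<longrightarrow> g v \<le> g u)) \<longrightarrow>
        integrable M (\<lambda>x. f (restrict (\<lambda>i. V i x) A)) \<longrightarrow>
        integrable M (\<lambda>x. g (restrict (\<lambda>i. V i x) B)) \<longrightarrow>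
        integrable M (\<lambda>x. f (restrict (\<lambda>i. V i x) A) * g (restrict (\<lambda>i. V i x) B)) \<longrightarrow>
        (\<integral>x. f (restrict (\<lambda>i. V i x) A) * g (restrict (\<lambda>i. V i x) B) \<partial>M)
          - (\<integral>x. f (restrict (\<lambda>i. V i x) A) \<partial>M) * (\<integral>x. g (restrict (\<lambda>i. V i x) B) \<partial>M) \<le> 0)"

end

theory Submission
  imports Defs
begin

(*
  For s > 0 the Gamma integral gives s^(-m) = Gamma(m)^(-1) * int_0^oo t^(m-1) exp(-s t) dt, so by
  Tonelli E[S^(-m)] <= Gamma(m)^(-1) * int_0^oo t^(m-1) E[exp(-t S)] dt. Inserting the bound on the
  Laplace transform turns the right-hand side into a Beta-prime integral, equal to
  C (q/mu)^m B(m, qd - m) / Gamma(m), and log-convexity of Gamma gives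
  (qd)^m B(m, qd - m) <= 2^m Gamma(m) as soon as qd >= 2m.

  For the second statement, negative association applied to the non-increasing functions
  exp(t sum_(j in A) v_j) and exp(t v_i) shows inductively that the Laplace transform of a sum is
  at most the product of the individual ones, so S_d satisfies the hypothesis of the first
  statement with C = 1.
*)

definition gamma_kernel :: "real \<Rightarrow> real \<Rightarrow> real \<Rightarrow> real" where
  "gamma_kernel r s t = indicator {0<..} t * t powr (r - 1) * exp (- (s * t))"

lemma borel_measurable_gamma_kernel [measurable (raw)]:
  assumes [measurable]: "f \<in> borel_measurable M" "g \<in> borel_measurable M"
  shows "(\<lambda>x. gamma_kernel r (f x) (g x)) \<in> borel_measurable M"
  unfolding gamma_kernel_def by measurable

lemma gamma_kernel_nonneg: "gamma_kernel r s t \<ge> 0"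
  by (simp add: gamma_kernel_def)

lemma nn_integral_gamma_kernel:
  fixes r s :: real
  assumes r: "r > 0" and s: "s > 0"
  shows "(\<integral>\<^sup>+t. ennreal (gamma_kernel r s t) \<partial>lborel) = ennreal (Gamma r / s powr r)"
proof -
  have "ennreal (Gamma r) = (\<integral>\<^sup>+t. ennreal (gamma_kernel r 1 t) \<partial>lborel)"
    unfolding Gamma_conv_nn_integral_real[OF r] gamma_kernel_def
    by (intro nn_integral_cong) (auto simp: indicator_def exp_minus field_simps)
  also have "\<dots> = ennreal s * (\<integral>\<^sup>+t. ennreal (gamma_kernel r 1 (s * t)) \<partial>lborel)"
    using nn_integral_real_affine[of "\<lambda>t. ennreal (gamma_kernel r 1 t)" s 0] s
    by (simp add: gamma_kernel_def)
  also have "(\<integral>\<^sup>+t. ennreal (gamma_kernel r 1 (s * t)) \<partial>lborel)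
           = (\<integral>\<^sup>+t. ennreal (s powr (r - 1)) * ennreal (gamma_kernel r s t) \<partial>lborel)"
    unfolding gamma_kernel_def using s
    by (intro nn_integral_cong) (auto simp: indicator_def powr_mult ennreal_mult'[symmetric] zero_less_mult_iff)
  also have "\<dots> = ennreal (s powr (r - 1)) * (\<integral>\<^sup>+t. ennreal (gamma_kernel r s t) \<partial>lborel)"
    by (rule nn_integral_cmult) measurable
  finally have "ennreal (Gamma r) = ennreal (s powr r) * (\<integral>\<^sup>+t. ennreal (gamma_kernel r s t) \<partial>lborel)"
    using s by (simp add: mult.assoc[symmetric] ennreal_mult[symmetric] powr_mult_base)
  then have "ennreal (1 / s powr r) * ennreal (Gamma r) = (\<integral>\<^sup>+t. ennreal (gamma_kernel r s t) \<partial>lborel)"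
    using s by (simp add: mult.assoc[symmetric] ennreal_mult[symmetric])
  then show ?thesis
    using s Gamma_real_pos[OF r] by (simp add: ennreal_mult[symmetric])
qed

lemma gamma_kernel_divide_powr: "gamma_kernel n s u / u powr m = gamma_kernel (n - m) s u"
  by (cases "u > 0") (simp_all add: gamma_kernel_def powr_diff)

lemma gamma_kernel_swap:
  "indicator {0<..} t * t powr (m - 1) * gamma_kernel n (1 + a * t) u
     = gamma_kernel n 1 u * gamma_kernel m (a * u) t"
  by (simp add: gamma_kernel_def exp_add[symmetric] algebra_simps)

lemma nn_integral_Beta_prime:
  fixes m n a :: real
  assumes m: "m > 0" and nm: "n > m" and a: "a > 0"
  shows "(\<integral>\<^sup>+t. ennreal (indicator {0<..} t * t powr (m - 1) * (1 + a * t) powr (- n)) \<partial>lborel)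
         = ennreal (Beta m (n - m) / a powr m)"
proof -
  have n: "n > 0" using m nm by simp
  have Gamma_pos: "Gamma n > 0" "Gamma m > 0" "Gamma (n - m) > 0"
    using Gamma_real_pos n m nm by auto
  let ?f = "\<lambda>t. indicator {0<..} t * t powr (m - 1) * (1 + a * t) powr (- n)"
  have inner_u: "ennreal (Gamma n) * ennreal (?f t)
      = (\<integral>\<^sup>+u. ennreal (gamma_kernel n 1 u * gamma_kernel m (a * u) t) \<partial>lborel)" for t
  proof (cases "t > 0")
    case True
    have "(\<integral>\<^sup>+u. ennreal (gamma_kernel n 1 u * gamma_kernel m (a * u) t) \<partial>lborel)
        = (\<integral>\<^sup>+u. ennreal (t powr (m - 1)) * ennreal (gamma_kernel n (1 + a * t) u) \<partial>lborel)"
      using True by (intro nn_integral_cong) (simp add: gamma_kernel_swap[symmetric] ennreal_mult')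
    also have "\<dots> = ennreal (t powr (m - 1)) * ennreal (Gamma n / (1 + a * t) powr n)"
      by (subst nn_integral_cmult, measurable) (use True a in \<open>simp add: nn_integral_gamma_kernel[OF n] add_pos_pos\<close>)
    finally show ?thesis
      using True a Gamma_pos by (simp add: ennreal_mult[symmetric] powr_minus_divide mult_ac)
  qed (simp add: gamma_kernel_def)
  have inner_t: "(\<integral>\<^sup>+t. ennreal (gamma_kernel n 1 u * gamma_kernel m (a * u) t) \<partial>lborel)
      = ennreal (Gamma m / a powr m) * ennreal (gamma_kernel (n - m) 1 u)" for u
  proof (cases "u > 0")
    case True
    have "(\<integral>\<^sup>+t. ennreal (gamma_kernel n 1 u * gamma_kernel m (a * u) t) \<partial>lborel)
        = ennreal (gamma_kernel n 1 u) * ennreal (Gamma m / (a * u) powr m)"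
      by (subst ennreal_mult, simp_all add: gamma_kernel_nonneg, subst nn_integral_cmult, measurable)
         (use True a in \<open>simp add: nn_integral_gamma_kernel[OF m]\<close>)
    also have "\<dots> = ennreal (Gamma m / a powr m * (gamma_kernel n 1 u / u powr m))"
      using True a Gamma_pos gamma_kernel_nonneg
      by (simp add: ennreal_mult[symmetric] powr_mult field_simps)
    also have "\<dots> = ennreal (Gamma m / a powr m) * ennreal (gamma_kernel (n - m) 1 u)"
      unfolding gamma_kernel_divide_powr
      using Gamma_pos(2) a by (intro ennreal_mult) (simp_all add: gamma_kernel_nonneg)
    finally show ?thesis .
  qed (simp add: gamma_kernel_def)
  have "ennreal (Gamma n) * (\<integral>\<^sup>+t. ennreal (?f t) \<partial>lborel)
      = (\<integral>\<^sup>+t. ennreal (Gamma n) * ennreal (?f t) \<partial>lborel)"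
    by (rule nn_integral_cmult[symmetric]) measurable
  also have "\<dots> = (\<integral>\<^sup>+t. \<integral>\<^sup>+u. ennreal (gamma_kernel n 1 u * gamma_kernel m (a * u) t) \<partial>lborel \<partial>lborel)"
    by (simp only: inner_u)
  also have "\<dots> = (\<integral>\<^sup>+u. \<integral>\<^sup>+t. ennreal (gamma_kernel n 1 u * gamma_kernel m (a * u) t) \<partial>lborel \<partial>lborel)"
    by (rule lborel_pair.Fubini') measurable
  also have "\<dots> = (\<integral>\<^sup>+u. ennreal (Gamma m / a powr m) * ennreal (gamma_kernel (n - m) 1 u) \<partial>lborel)"
    by (simp only: inner_t)
  also have "\<dots> = ennreal (Gamma m / a powr m) * ennreal (Gamma (n - m))"
    by (subst nn_integral_cmult, measurable) (use nm in \<open>simp add: nn_integral_gamma_kernel\<close>)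
  also have "\<dots> = ennreal (Gamma n) * ennreal (Beta m (n - m) / a powr m)"
    using Gamma_pos a by (simp add: Beta_def ennreal_mult'[symmetric])
  finally show ?thesis
    using Gamma_pos by (simp add: ennreal_mult_cancel_left)
qed

lemma powr_mult_Gamma_le_Gamma_add:
  fixes y m :: real
  assumes y: "y > 0" and m: "m \<ge> 1"
  shows "y powr m * Gamma y \<le> Gamma (y + m)"
proof -
  have Gamma_pos: "Gamma y > 0" "Gamma (y + m) > 0" using Gamma_real_pos y m by auto
  have "ln (Gamma ((1 - 1/m) *\<^sub>R y + (1/m) *\<^sub>R (y + m)))
      \<le> (1 - 1/m) * ln (Gamma y) + (1/m) * ln (Gamma (y + m))"
    using convex_onD[OF log_convex_Gamma_real, of "1/m" y "y + m"] m y by simp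
  moreover have "(1 - 1/m) *\<^sub>R y + (1/m) *\<^sub>R (y + m) = y + 1" using m by (simp add: field_simps)
  moreover have "Gamma (y + 1) = y * Gamma y"
    using y by (intro Gamma_plus1) (auto elim!: nonpos_Ints_cases)
  then have "ln (Gamma (y + 1)) = ln y + ln (Gamma y)"
    using ln_mult_pos[OF y Gamma_pos(1)] by simp
  ultimately have "ln y + ln (Gamma y) \<le> (1 - 1/m) * ln (Gamma y) + (1/m) * ln (Gamma (y + m))"
    by simp
  then have "m * ln y + ln (Gamma y) \<le> ln (Gamma (y + m))"
    using m by (simp add: field_simps)
  then have "exp (m * ln y + ln (Gamma y)) \<le> Gamma (y + m)"
    using Gamma_pos(2) by (metis exp_le_cancel_iff exp_ln)
  then show ?thesis
    using y Gamma_pos by (simp add: exp_add powr_def mult_ac)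
qed

lemma powr_mult_Beta_le:
  fixes m n :: real
  assumes m: "m \<ge> 1" and n: "n \<ge> 2 * m"
  shows "n powr m * Beta m (n - m) \<le> 2 powr m * Gamma m"
proof -
  have y: "n - m > 0" using m n by simp
  have Gamma_pos: "Gamma m > 0" "Gamma n > 0" "Gamma (n - m) > 0" using Gamma_real_pos y m by auto
  have "n powr m * Gamma (n - m) \<le> (2 powr m * (n - m) powr m) * Gamma (n - m)"
    using m n Gamma_pos by (intro mult_right_mono) (simp_all add: powr_mult[symmetric] powr_mono2)
  also have "\<dots> \<le> 2 powr m * Gamma n"
    using powr_mult_Gamma_le_Gamma_add[OF y m] by (simp add: mult.assoc)
  finally have "n powr m * Gamma (n - m) / Gamma n \<le> 2 powr m"
    using Gamma_pos by (simp add: divide_le_eq)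
  then have "Gamma m * (n powr m * Gamma (n - m) / Gamma n) \<le> Gamma m * 2 powr m"
    using Gamma_pos by (intro mult_left_mono) auto
  then show ?thesis
    by (simp add: Beta_def field_simps)
qed

lemma inverse_powr_eq_nn_integral_gamma_kernel:
  fixes D s m :: real
  assumes "D \<ge> 0" "s > 0" "m > 0"
  shows "ennreal ((D / s) powr m) = ennreal (D powr m / Gamma m) * (\<integral>\<^sup>+t. ennreal (gamma_kernel m s t) \<partial>lborel)"
proof -
  have "Gamma m > 0" using \<open>m > 0\<close> by (rule Gamma_real_pos)
  then show ?thesis
    using assms by (simp add: nn_integral_gamma_kernel ennreal_mult[symmetric] powr_divide less_imp_neq[symmetric])
qed

lemma nn_integral_inverse_powr_le:
  fixes M :: "'a measure" and S :: "'a \<Rightarrow> real" and D m :: real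
  assumes "sigma_finite_measure M" and [measurable]: "S \<in> borel_measurable M"
    and S_nonneg: "\<And>x. x \<in> space M \<Longrightarrow> S x \<ge> 0" and "D \<ge> 0" "m > 0"
  shows "(\<integral>\<^sup>+x. ennreal ((D / S x) powr m) \<partial>M)
         \<le> ennreal (D powr m / Gamma m) * (\<integral>\<^sup>+t. \<integral>\<^sup>+x. ennreal (gamma_kernel m (S x) t) \<partial>M \<partial>lborel)"
proof -
  interpret pair_sigma_finite M lborel
    using assms(1) by (simp add: pair_sigma_finite_def lborel.sigma_finite_measure_axioms)
  \<comment> \<open>only an inequality: where S x = 0 the left side is 0 by the convention D / 0 = 0\<close>
  have "ennreal ((D / S x) powr m) \<le> ennreal (D powr m / Gamma m) * (\<integral>\<^sup>+t. ennreal (gamma_kernel m (S x) t) \<partial>lborel)"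
    if "x \<in> space M" for x
    using S_nonneg[OF that] assms inverse_powr_eq_nn_integral_gamma_kernel[of D "S x" m]
    by (cases "S x = 0") auto
  then have "(\<integral>\<^sup>+x. ennreal ((D / S x) powr m) \<partial>M)
      \<le> (\<integral>\<^sup>+x. ennreal (D powr m / Gamma m) * (\<integral>\<^sup>+t. ennreal (gamma_kernel m (S x) t) \<partial>lborel) \<partial>M)"
    by (rule nn_integral_mono)
  also have "\<dots> = ennreal (D powr m / Gamma m) * (\<integral>\<^sup>+x. \<integral>\<^sup>+t. ennreal (gamma_kernel m (S x) t) \<partial>lborel \<partial>M)"
    by (rule nn_integral_cmult) measurable
  also have "(\<integral>\<^sup>+x. \<integral>\<^sup>+t. ennreal (gamma_kernel m (S x) t) \<partial>lborel \<partial>M)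
           = (\<integral>\<^sup>+t. \<integral>\<^sup>+x. ennreal (gamma_kernel m (S x) t) \<partial>M \<partial>lborel)"
    by (rule Fubini'[symmetric]) measurable
  finally show ?thesis .
qed

lemma (in prob_space) integrable_exp_mult_nonpos:
  fixes X :: "'a \<Rightarrow> real" and t :: real
  assumes "t \<le> 0" and [measurable]: "X \<in> borel_measurable M"
    and "\<And>x. x \<in> space M \<Longrightarrow> X x \<ge> 0"
  shows "integrable M (\<lambda>x. exp (t * X x))"
proof (rule integrable_const_bound[where B = 1])
  have "t * X x \<le> 0" if "x \<in> space M" for x
    using assms(1) assms(3)[OF that] by (simp add: mult_le_0_iff)
  then show "AE x in M. norm (exp (t * X x)) \<le> 1"
    by (intro AE_I2) simp
qed measurable

lemma (in prob_space) nn_integral_gamma_kernel_eq_mgf: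
  assumes [measurable]: "S \<in> borel_measurable M" and S_nonneg: "\<And>x. x \<in> space M \<Longrightarrow> S x \<ge> 0"
  shows "(\<integral>\<^sup>+x. ennreal (gamma_kernel m (S x) t) \<partial>M)
         = ennreal (indicator {0<..} t * t powr (m - 1) * (\<integral>x. exp ((- t) * S x) \<partial>M))"
proof (cases "t > 0")
  case True
  have "integrable M (\<lambda>x. exp ((- t) * S x))"
    using True S_nonneg by (intro integrable_exp_mult_nonpos) auto
  then have "(\<integral>\<^sup>+x. ennreal (exp ((- t) * S x)) \<partial>M) = ennreal (\<integral>x. exp ((- t) * S x) \<partial>M)"
    by (rule nn_integral_eq_integral) auto
  moreover have "(\<integral>\<^sup>+x. ennreal (gamma_kernel m (S x) t) \<partial>M)
      = (\<integral>\<^sup>+x. ennreal (t powr (m - 1)) * ennreal (exp ((- t) * S x)) \<partial>M)"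
    using True by (intro nn_integral_cong) (simp add: gamma_kernel_def ennreal_mult[symmetric] mult.commute)
  ultimately show ?thesis
    using True by (simp add: nn_integral_cmult ennreal_mult integral_nonneg)
qed (simp add: gamma_kernel_def)

lemma (in prob_space) nn_integral_inverse_powr_le_of_mgf_le:
  fixes S :: "'a \<Rightarrow> real" and \<mu> q C D m :: real
  assumes \<mu>: "\<mu> > 0" and q: "q > 0"
    and [measurable]: "S \<in> borel_measurable M" and S_nonneg: "\<And>x. x \<in> space M \<Longrightarrow> S x \<ge> 0"
    and mgf: "\<And>t. t \<le> 0 \<Longrightarrow> (\<integral>x. exp (t * S x) \<partial>M) \<le> C / (1 - \<mu> * t / q) powr (q * D)"
    and m: "m \<ge> 1" and D: "D > 0" "D \<ge> 2 * m / q"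
  shows "(\<integral>\<^sup>+x. ennreal ((D / S x) powr m) \<partial>M) \<le> ennreal (C * (2 / \<mu>) powr m)"
proof -
  define n where "n = q * D"
  define a where "a = \<mu> / q"
  have a: "a > 0" using \<mu> q by (simp add: a_def)
  have n: "n \<ge> 2 * m" using D q by (simp add: n_def field_simps)
  have C: "C \<ge> 1" using mgf[of 0] by (simp add: prob_space)
  have Gamma_pos: "Gamma m > 0" using m by simp
  have Beta_pos: "Beta m (n - m) > 0" using m n by (simp add: Beta_def)
  have mgf_kernel: "(\<integral>\<^sup>+x. ennreal (gamma_kernel m (S x) t) \<partial>M)
      \<le> ennreal C * ennreal (indicator {0<..} t * t powr (m - 1) * (1 + a * t) powr (- n))" for t
  proof (cases "t > 0")
    case True
    have "(\<integral>x. exp ((- t) * S x) \<partial>M) \<le> C * (1 + a * t) powr (- n)"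
      using mgf[of "- t"] True by (simp add: a_def n_def powr_minus_divide)
    then show ?thesis
      using True C by (simp add: nn_integral_gamma_kernel_eq_mgf S_nonneg ennreal_mult[symmetric] mult_ac)
  qed (simp add: gamma_kernel_def)
  have "(\<integral>\<^sup>+x. ennreal ((D / S x) powr m) \<partial>M)
      \<le> ennreal (D powr m / Gamma m) * (\<integral>\<^sup>+t. \<integral>\<^sup>+x. ennreal (gamma_kernel m (S x) t) \<partial>M \<partial>lborel)"
    using D m by (intro nn_integral_inverse_powr_le sigma_finite_measure_axioms S_nonneg) auto
  also have "\<dots> \<le> ennreal (D powr m / Gamma m)
      * (\<integral>\<^sup>+t. ennreal C * ennreal (indicator {0<..} t * t powr (m - 1) * (1 + a * t) powr (- n)) \<partial>lborel)"
    by (intro mult_left_mono nn_integral_mono mgf_kernel) auto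
  also have "\<dots> = ennreal (D powr m / Gamma m) * (ennreal C * ennreal (Beta m (n - m) / a powr m))"
    using m n a by (subst nn_integral_cmult, measurable) (simp add: nn_integral_Beta_prime)
  also have "\<dots> = ennreal (C * (n powr m * Beta m (n - m) / Gamma m) / \<mu> powr m)"
    using D C a Gamma_pos Beta_pos
    by (simp add: ennreal_mult[symmetric] a_def n_def powr_divide powr_mult field_simps)
  also have "\<dots> \<le> ennreal (C * (2 / \<mu>) powr m)"
    using powr_mult_Beta_le[OF m n] Gamma_pos C \<mu>
    by (intro ennreal_leI) (simp add: powr_divide divide_right_mono field_simps)
  finally show ?thesis .
qed

lemma neg_assoc_integral_mult_le:
  fixes f g :: "(nat \<Rightarrow> real) \<Rightarrow> real"
  assumes "neg_assoc M V I" and "A \<subseteq> I" "B \<subseteq> I" "A \<inter> B = {}"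
    and "f \<in> borel_measurable (Pi\<^sub>M A (\<lambda>_. borel))" "g \<in> borel_measurable (Pi\<^sub>M B (\<lambda>_. borel))"
    and "\<And>u v. u \<le> v \<Longrightarrow> f v \<le> f u" "\<And>u v. u \<le> v \<Longrightarrow> g v \<le> g u"
    and "integrable M (\<lambda>x. f (restrict (\<lambda>i. V i x) A))" "integrable M (\<lambda>x. g (restrict (\<lambda>i. V i x) B))"
    and "integrable M (\<lambda>x. f (restrict (\<lambda>i. V i x) A) * g (restrict (\<lambda>i. V i x) B))"
  shows "(\<integral>x. f (restrict (\<lambda>i. V i x) A) * g (restrict (\<lambda>i. V i x) B) \<partial>M)
         \<le> (\<integral>x. f (restrict (\<lambda>i. V i x) A) \<partial>M) * (\<integral>x. g (restrict (\<lambda>i. V i x) B) \<partial>M)"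
  using assms(1)[unfolded neg_assoc_def, THEN conjunct2, rule_format, of A B f g] assms(2-) by auto

lemma (in prob_space) neg_assoc_mgf_sum_le_prod:
  assumes NA: "neg_assoc M V I" and "finite A" "A \<subseteq> I"
    and V_nonneg: "\<And>i x. i \<in> A \<Longrightarrow> x \<in> space M \<Longrightarrow> V i x \<ge> 0" and t: "t \<le> 0"
  shows "(\<integral>x. exp (t * (\<Sum>i\<in>A. V i x)) \<partial>M) \<le> (\<Prod>i\<in>A. \<integral>x. exp (t * V i x) \<partial>M)"
  using \<open>finite A\<close> \<open>A \<subseteq> I\<close> V_nonneg
proof (induction A rule: finite_induct)
  case empty
  then show ?case by (simp add: prob_space)
next
  case (insert i A)
  have V_meas [measurable]: "V j \<in> borel_measurable M" if "j \<in> I" for j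
    using NA that unfolding neg_assoc_def by blast
  have [measurable]: "(\<lambda>x. \<Sum>j\<in>A. V j x) \<in> borel_measurable M"
    using insert.prems(1) by (intro borel_measurable_sum V_meas) auto
  have [measurable]: "V i \<in> borel_measurable M"
    using insert.prems(1) by auto
  have sum_V_nonneg: "(\<Sum>j\<in>A. V j x) \<ge> 0" and V_i_nonneg: "V i x \<ge> 0" if "x \<in> space M" for x
    using insert.prems(2) that by (auto intro: sum_nonneg)
  define f where "f u = exp (t * (\<Sum>j\<in>A. u j))" for u :: "nat \<Rightarrow> real"
  define g where "g u = exp (t * u i)" for u :: "nat \<Rightarrow> real"
  have f_V: "f (restrict (\<lambda>j. V j x) A) = exp (t * (\<Sum>j\<in>A. V j x))"
    and g_V: "g (restrict (\<lambda>j. V j x) {i}) = exp (t * V i x)" for x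
    by (simp_all add: f_def g_def)
  have "f \<in> borel_measurable (Pi\<^sub>M A (\<lambda>_. borel))" "g \<in> borel_measurable (Pi\<^sub>M {i} (\<lambda>_. borel))"
    unfolding f_def g_def by measurable
  moreover have "f v \<le> f u" "g v \<le> g u" if "u \<le> v" for u v
    using t that by (auto simp: f_def g_def le_fun_def mult_left_mono_neg sum_mono)
  moreover have "integrable M (\<lambda>x. exp (t * (\<Sum>j\<in>A. V j x)) * exp (t * V i x))"
    using integrable_exp_mult_nonpos[OF t, of "\<lambda>x. (\<Sum>j\<in>A. V j x) + V i x"] sum_V_nonneg V_i_nonneg
    by (simp add: distrib_left exp_add)
  ultimately have "(\<integral>x. exp (t * (\<Sum>j\<in>A. V j x)) * exp (t * V i x) \<partial>M)
      \<le> (\<integral>x. exp (t * (\<Sum>j\<in>A. V j x)) \<partial>M) * (\<integral>x. exp (t * V i x) \<partial>M)"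
    using neg_assoc_integral_mult_le[OF NA, of A "{i}" f g] insert
    by (simp add: f_V g_V integrable_exp_mult_nonpos t sum_V_nonneg V_i_nonneg)
  also have "\<dots> \<le> (\<Prod>j\<in>A. \<integral>x. exp (t * V j x) \<partial>M) * (\<integral>x. exp (t * V i x) \<partial>M)"
    using insert by (intro mult_right_mono integral_nonneg) auto
  finally show ?case
    using insert.hyps by (simp add: distrib_left exp_add mult.commute)
qed

lemma (in prob_space) neg_assoc_mgf_sum_le_powr:
  fixes \<mu> q t :: real
  assumes NA: "neg_assoc M V I" and "finite A" "A \<subseteq> I"
    and V_nonneg: "\<And>i x. i \<in> A \<Longrightarrow> x \<in> space M \<Longrightarrow> V i x \<ge> 0"
    and mgf: "\<And>i. i \<in> A \<Longrightarrow> (\<integral>x. exp (t * V i x) \<partial>M) \<le> 1 / (1 - \<mu> * t / q) powr q"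
    and "\<mu> > 0" "q > 0" "t \<le> 0"
  shows "(\<integral>x. exp (t * (\<Sum>i\<in>A. V i x)) \<partial>M) \<le> 1 / (1 - \<mu> * t / q) powr (q * card A)"
proof -
  define b where "b = 1 - \<mu> * t / q"
  have "\<mu> * t \<le> 0" using \<open>\<mu> > 0\<close> \<open>t \<le> 0\<close> by (simp add: mult_nonneg_nonpos)
  then have "b > 0" using \<open>q > 0\<close> by (simp add: b_def divide_nonpos_pos)
  have "(\<integral>x. exp (t * (\<Sum>i\<in>A. V i x)) \<partial>M) \<le> (\<Prod>i\<in>A. \<integral>x. exp (t * V i x) \<partial>M)"
    using assms by (intro neg_assoc_mgf_sum_le_prod[OF NA]) auto
  also have "\<dots> \<le> (\<Prod>i\<in>A. 1 / b powr q)"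
    using mgf by (intro prod_mono) (auto simp: b_def)
  also have "\<dots> = 1 / b powr (q * card A)"
    using \<open>b > 0\<close> by (simp add: power_one_over powr_realpow[symmetric] powr_powr)
  finally show ?thesis by (simp add: b_def)
qed

theorem mainTheorem17:
  fixes M :: "'a measure" and \<mu> q :: real
  assumes "prob_space M" and "\<mu> > 0" and "q > 0"
  shows
   "(\<forall>(S :: nat \<Rightarrow> 'a \<Rightarrow> real) (C :: real).
       C > 0 \<longrightarrow>
       (\<forall>d\<ge>1. S d \<in> borel_measurable M \<and> (\<forall>x\<in>space M. S d x \<ge> 0)) \<longrightarrow>
       (\<forall>d\<ge>1. \<forall>t::real. t \<le> 0 \<longrightarrow>
          (\<integral>x. exp (t * S d x) \<partial>M) \<le> C / (1 - \<mu> * t / q) powr (q * real d)) \<longrightarrow>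
       (\<forall>(m::real) (d::nat). m \<ge> 1 \<longrightarrow> d \<ge> 1 \<longrightarrow> real d \<ge> 2 * m / q \<longrightarrow>
          (\<integral>\<^sup>+x. ennreal ((real d / S d x) powr m) \<partial>M) \<le> ennreal (C * (2 / \<mu>) powr m)))
    \<and>
    (\<forall>(d::nat) (V :: nat \<Rightarrow> 'a \<Rightarrow> real) (m::real).
       d \<ge> 1 \<longrightarrow>
       neg_assoc M V {1..d} \<longrightarrow>
       (\<forall>i\<in>{1..d}. \<forall>x\<in>space M. V i x \<ge> 0) \<longrightarrow>
       (\<forall>i\<in>{1..d}. \<forall>t::real. t \<le> 0 \<longrightarrow>
          (\<integral>x. exp (t * V i x) \<partial>M) \<le> 1 / (1 - \<mu> * t / q) powr q) \<longrightarrow>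
       m \<ge> 1 \<longrightarrow> real d \<ge> 2 * m / q \<longrightarrow>
       (\<integral>\<^sup>+x. ennreal ((real d / (\<Sum>i=1..d. V i x)) powr m) \<partial>M) \<le> ennreal ((2 / \<mu>) powr m))"
proof (intro conjI allI impI)
  interpret prob_space M by fact
  fix S :: "nat \<Rightarrow> 'a \<Rightarrow> real" and C m :: real and d :: nat
  assume "C > 0" "\<forall>d\<ge>1. S d \<in> borel_measurable M \<and> (\<forall>x\<in>space M. S d x \<ge> 0)"
    "\<forall>d\<ge>1. \<forall>t::real. t \<le> 0 \<longrightarrow> (\<integral>x. exp (t * S d x) \<partial>M) \<le> C / (1 - \<mu> * t / q) powr (q * real d)"
    "m \<ge> 1" "d \<ge> 1" "real d \<ge> 2 * m / q"
  then show "(\<integral>\<^sup>+x. ennreal ((real d / S d x) powr m) \<partial>M) \<le> ennreal (C * (2 / \<mu>) powr m)"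
    using assms by (intro nn_integral_inverse_powr_le_of_mgf_le) auto
next
  interpret prob_space M by fact
  fix d :: nat and V :: "nat \<Rightarrow> 'a \<Rightarrow> real" and m :: real
  assume "d \<ge> 1" and NA: "neg_assoc M V {1..d}" and V_nonneg: "\<forall>i\<in>{1..d}. \<forall>x\<in>space M. V i x \<ge> 0"
    and mgf: "\<forall>i\<in>{1..d}. \<forall>t::real. t \<le> 0 \<longrightarrow> (\<integral>x. exp (t * V i x) \<partial>M) \<le> 1 / (1 - \<mu> * t / q) powr q"
    and "m \<ge> 1" "real d \<ge> 2 * m / q"
  have "(\<lambda>x. \<Sum>i=1..d. V i x) \<in> borel_measurable M"
    using NA by (intro borel_measurable_sum) (simp add: neg_assoc_def)
  moreover have "(\<integral>x. exp (t * (\<Sum>i=1..d. V i x)) \<partial>M) \<le> 1 / (1 - \<mu> * t / q) powr (q * real d)"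
    if "t \<le> 0" for t
    using neg_assoc_mgf_sum_le_powr[OF NA, of "{1..d}" t \<mu> q] V_nonneg mgf assms that by simp
  ultimately have "(\<integral>\<^sup>+x. ennreal ((real d / (\<Sum>i=1..d. V i x)) powr m) \<partial>M) \<le> ennreal (1 * (2 / \<mu>) powr m)"
    using assms V_nonneg \<open>d \<ge> 1\<close> \<open>m \<ge> 1\<close> \<open>real d \<ge> 2 * m / q\<close>
    by (intro nn_integral_inverse_powr_le_of_mgf_le) (auto intro: sum_nonneg)
  then show "(\<integral>\<^sup>+x. ennreal ((real d / (\<Sum>i=1..d. V i x)) powr m) \<partial>M) \<le> ennreal ((2 / \<mu>) powr m)"
    by simp
qed

end
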